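(* Let $\mathbb{H}^n$ be $\mathbb{R}^n$ or $\mathbb{C}^n$, and let $m\ge \frac{n(n+1)}{2}$ in the real case and $m\ge n^2$ in the complex case. The set of all $m$-element Parseval frames for $\mathbb{H}^n$ which are injective is dense, with respect to the distance $d$, in the set of all $m$-element Parseval frames for $\mathbb{H}^n$.
   Context: A frame $\{x_k\}_{k=1}^m$ for $\mathbb{H}^n$ is Parseval if $\sum_{k=1}^m|\langle x,x_k\rangle|^2=\|x\|^2$ for all $x$. A family $\{x_k\}$ is called injective if whenever a self-adjoint operator $T$ satisfies $\langle Tx_k,x_k\rangle=0$ for all $k$, then $T=0$. For $m$-element frames, $d(\{x_k\},\{y_k\})^2=\sum_{k=1}^m\|x_k-y_k\|^2$. *)

theory Defs
  imports "HOL-Analysis.Analysis"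
begin

definition cinner :: "complex^'n \<Rightarrow> complex^'n \<Rightarrow> complex" where
  "cinner x y = (\<Sum>i\<in>UNIV. x$i * cnj (y$i))"

text \<open>m-element families are indexed by a finite type 'm with CARD('m) = m.\<close>

definition parseval_real :: "('m::finite \<Rightarrow> real^'n) \<Rightarrow> bool" where
  "parseval_real F \<longleftrightarrow> (\<forall>x. (\<Sum>k\<in>UNIV. (x \<bullet> F k)^2) = (norm x)^2)"

definition parseval_complex :: "('m::finite \<Rightarrow> complex^'n) \<Rightarrow> bool" where
  "parseval_complex F \<longleftrightarrow> (\<forall>x. (\<Sum>k\<in>UNIV. (cmod (cinner x (F k)))^2) = (norm x)^2)"

definition self_adjoint_real :: "(real^'n \<Rightarrow> real^'n) \<Rightarrow> bool" where
  "self_adjoint_real T \<longleftrightarrow> linear T \<and> (\<forall>x y. T x \<bullet> y = x \<bullet> T y)"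

definition self_adjoint_complex :: "(complex^'n \<Rightarrow> complex^'n) \<Rightarrow> bool" where
  "self_adjoint_complex T \<longleftrightarrow> (\<forall>x y. T x + T y = T (x + y)) \<and> (\<forall>c x. T (c *s x) = c *s T x)
     \<and> (\<forall>x y. cinner (T x) y = cinner x (T y))"

definition injective_real :: "('m::finite \<Rightarrow> real^'n) \<Rightarrow> bool" where
  "injective_real F \<longleftrightarrow>
     (\<forall>T. self_adjoint_real T \<and> (\<forall>k. T (F k) \<bullet> F k = 0) \<longrightarrow> T = (\<lambda>_. 0))"

definition injective_complex :: "('m::finite \<Rightarrow> complex^'n) \<Rightarrow> bool" where
  "injective_complex F \<longleftrightarrow>
     (\<forall>T. self_adjoint_complex T \<and> (\<forall>k. cinner (T (F k)) (F k) = 0) \<longrightarrow> T = (\<lambda>_. 0))"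

definition frame_dist :: "('m::finite \<Rightarrow> 'a::real_normed_vector) \<Rightarrow> ('m \<Rightarrow> 'a) \<Rightarrow> real" where
  "frame_dist F G = sqrt (\<Sum>k\<in>UNIV. (norm (F k - G k))^2)"

end

theory Submission
  imports Defs "HOL-Computational_Algebra.Formal_Power_Series" "HOL-Library.Countable"
begin

text \<open>Both cases are handled at once over a normed field with a conjugation. A family \<open>F\<close> is
  Parseval iff its frame operator \<open>S = \<Sum>\<^sub>k F\<^sub>k F\<^sub>k\<^sup>*\<close> is the identity, and it is injective iff
  no nonzero Hermitian matrix \<open>Y\<close> has \<open>\<langle>Y F\<^sub>k, F\<^sub>k\<rangle> = 0\<close> for all \<open>k\<close>; the latter is
  injectivity of a matrix \<open>L(F)\<close> whose entries are polynomial in \<open>F\<close>. Under the bound on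
  \<open>m\<close> an injective frame \<open>H\<close> exists (vectors \<open>e\<^sub>i + e\<^sub>j\<close>, resp. \<open>e\<^sub>i + \<i> e\<^sub>j\<close>). Along
  \<open>F + t (H - F)\<close> the polynomial \<open>det (L* L)\<close> does not vanish at \<open>t = 1\<close>, so for all small
  \<open>t \<noteq> 0\<close> the frame is injective; its frame operator \<open>I + E\<close> is close to \<open>I\<close>, and
  applying \<open>(I + E)\<^sup>-\<^sup>1\<^sup>/\<^sup>2\<close>, given by the binomial series, yields a nearby injective Parseval
  frame.\<close>

section \<open>Fields with a conjugation\<close>

locale conj_field =
  fixes cj :: "'a::{real_normed_field,banach} \<Rightarrow> 'a"
  assumes cj_add: "cj (a + b) = cj a + cj b"
    and cj_mult: "cj (a * b) = cj a * cj b"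
    and cj_cj [simp]: "cj (cj a) = a"
    and cj_of_real [simp]: "cj (of_real r) = of_real r"
    and mult_cj: "a * cj a = of_real ((norm a)^2)"
begin

lemma cj_zero [simp]: "cj 0 = 0"
  using cj_add[of 0 0] by simp

lemma cj_one [simp]: "cj 1 = 1"
  using cj_of_real[of 1] by simp

lemma cj_diff: "cj (a - b) = cj a - cj b"
proof -
  have "cj (a - b) + cj b = cj a" by (metis cj_add diff_add_cancel)
  then show ?thesis by (simp add: eq_diff_eq)
qed

lemma cj_sum: "cj (sum f A) = (\<Sum>x\<in>A. cj (f x))"
  by (induction A rule: infinite_finite_induct) (auto simp: cj_add)

lemma cj_scaleR: "cj (r *\<^sub>R a) = r *\<^sub>R cj a"
  by (simp add: scaleR_conv_of_real cj_mult)

lemma norm_cj [simp]: "norm (cj a) = norm a"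
proof (cases "a = 0")
  case False
  have "norm a * norm (cj a) = norm a * norm a"
    using arg_cong[OF mult_cj[of a], of norm] by (simp add: norm_mult power2_eq_square)
  then show ?thesis using False by simp
qed simp

definition hinner :: "'a^'n \<Rightarrow> 'a^'n \<Rightarrow> 'a" where
  "hinner x y = (\<Sum>i\<in>UNIV. x$i * cj (y$i))"

lemma hinner_add_left: "hinner (x + y) z = hinner x z + hinner y z"
  by (simp add: hinner_def distrib_right sum.distrib)

lemma hinner_add_right: "hinner x (y + z) = hinner x y + hinner x z"
  by (simp add: hinner_def cj_add distrib_left sum.distrib)

lemma hinner_diff_left: "hinner (x - y) z = hinner x z - hinner y z"
  by (simp add: hinner_def left_diff_distrib sum_subtractf)

lemma hinner_scale_left: "hinner (c *s x) y = c * hinner x y"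
  by (simp add: hinner_def sum_distrib_left mult.assoc)

lemma hinner_scale_right: "hinner x (c *s y) = cj c * hinner x y"
  by (simp add: hinner_def sum_distrib_left cj_mult mult.assoc mult.left_commute)

lemma cj_hinner: "cj (hinner x y) = hinner y x"
  by (simp add: hinner_def cj_sum cj_mult mult.commute)

lemma hinner_axis_right: "hinner v (axis i 1) = v $ i"
  by (simp add: hinner_def axis_def if_distrib cong: if_cong)

lemma hinner_self: "hinner x x = of_real ((norm x)^2)"
  by (simp add: hinner_def mult_cj norm_vec_def L2_set_def sum_nonneg)

lemma hinner_self_eq_0: "hinner x x = 0 \<longleftrightarrow> x = 0"
  by (simp add: hinner_self)

definition ctrans :: "'a^'c^'r \<Rightarrow> 'a^'r^'c" where
  "ctrans A = (\<chi> i j. cj (A$j$i))"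

lemma ctrans_ctrans [simp]: "ctrans (ctrans A) = A"
  by (simp add: ctrans_def vec_eq_iff)

lemma ctrans_mat_1 [simp]: "ctrans (mat 1) = mat 1"
  by (simp add: ctrans_def mat_def vec_eq_iff)

lemma ctrans_add: "ctrans (A + B) = ctrans A + ctrans B"
  by (simp add: ctrans_def vec_eq_iff cj_add)

lemma ctrans_diff: "ctrans (A - B) = ctrans A - ctrans B"
  by (simp add: ctrans_def vec_eq_iff cj_diff)

lemma ctrans_scaleR: "ctrans (c *\<^sub>R A) = c *\<^sub>R ctrans A"
  by (simp add: ctrans_def vec_eq_iff cj_scaleR)

lemma ctrans_mult: "ctrans (A ** B) = ctrans B ** ctrans A"
  by (simp add: ctrans_def vec_eq_iff matrix_matrix_mult_def cj_sum cj_mult mult.commute)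

lemma hinner_matrix_left: "hinner (A *v x) y = hinner x (ctrans A *v y)"
proof -
  have "hinner (A *v x) y = (\<Sum>i\<in>UNIV. \<Sum>j\<in>UNIV. A$i$j * x$j * cj (y$i))"
    by (simp add: hinner_def matrix_vector_mult_def sum_distrib_right)
  also have "\<dots> = (\<Sum>j\<in>UNIV. \<Sum>i\<in>UNIV. A$i$j * x$j * cj (y$i))"
    by (rule sum.swap)
  also have "\<dots> = hinner x (ctrans A *v y)"
    by (simp add: hinner_def ctrans_def matrix_vector_mult_def cj_sum cj_mult sum_distrib_left mult_ac)
  finally show ?thesis .
qed

lemma matrix_eq_0_iff_mult: "(A::'a^'c^'r) = 0 \<longleftrightarrow> (\<forall>x. A *v x = 0)"
proof (intro iffI allI)
  assume "\<forall>x. A *v x = 0"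
  moreover have "(A *v axis j 1) $ i = A$i$j" for i j
    by (simp add: matrix_vector_mult_def axis_def if_distrib cong: if_cong)
  ultimately show "A = 0" by (simp add: vec_eq_iff)
qed simp

lemma hermitian_eq_0_if_quadratic_form_0:
  fixes P :: "'a^'n^'n"
  assumes herm: "ctrans P = P" and q: "\<And>x. hinner (P *v x) x = 0"
  shows "P = 0"
proof -
  have sesquilinear_0: "hinner (P *v x) y = 0" for x y
  proof -
    have polar: "hinner (P *v x) (c *s y) + cj (hinner (P *v x) (c *s y)) = 0" for c
    proof -
      have "0 = hinner (P *v (x + c *s y)) (x + c *s y)" using q by simp
      also have "\<dots> = hinner (P *v x) x + hinner (P *v (c *s y)) (c *s y)
          + hinner (P *v x) (c *s y) + hinner (P *v (c *s y)) x"
        by (simp add: matrix_vector_right_distrib hinner_add_left hinner_add_right algebra_simps)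
      also have "hinner (P *v (c *s y)) x = cj (hinner (P *v x) (c *s y))"
        by (metis herm cj_hinner hinner_matrix_left)
      finally show ?thesis using q by simp
    qed
    define w where "w = hinner (P *v x) y"
    \<comment> \<open>Choosing \<open>c = w\<close> turns the polarization identity into \<open>2 |w|^2 = 0\<close>.\<close>
    have "cj w * w + cj (cj w * w) = 0"
      using polar[of w] by (simp add: hinner_scale_right w_def)
    moreover have "cj w * w = of_real ((norm w)^2)"
      using mult_cj[of w] by (simp add: mult.commute)
    ultimately have "of_real ((norm w)^2 + (norm w)^2) = (0::'a)"
      by (simp only: of_real_add cj_of_real)
    then show ?thesis by (simp add: w_def)
  qed
  have "P *v x = 0" for x
    using sesquilinear_0[of x "P *v x"] by (simp add: hinner_self_eq_0)
  then show ?thesis by (simp add: matrix_eq_0_iff_mult)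
qed

end

section \<open>Frames over a field with conjugation\<close>

lemma sum_rotate3:
  "(\<Sum>k\<in>C. \<Sum>a\<in>A. \<Sum>b\<in>B. f k a b) = (\<Sum>a\<in>A. \<Sum>b\<in>B. \<Sum>k\<in>C. f k a b)"
proof -
  have "(\<Sum>k\<in>C. \<Sum>a\<in>A. \<Sum>b\<in>B. f k a b) = (\<Sum>a\<in>A. \<Sum>k\<in>C. \<Sum>b\<in>B. f k a b)"
    by (rule sum.swap)
  also have "\<dots> = (\<Sum>a\<in>A. \<Sum>b\<in>B. \<Sum>k\<in>C. f k a b)"
    by (intro sum.cong refl sum.swap)
  finally show ?thesis .
qed

context conj_field
begin

definition frame_op :: "('m::finite \<Rightarrow> 'a^'n) \<Rightarrow> 'a^'n^'n" where
  "frame_op F = (\<chi> i j. \<Sum>k\<in>UNIV. F k $ i * cj (F k $ j))"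

definition parseval :: "('m::finite \<Rightarrow> 'a^'n) \<Rightarrow> bool" where
  "parseval F \<longleftrightarrow> (\<forall>x. (\<Sum>k\<in>UNIV. (norm (hinner x (F k)))^2) = (norm x)^2)"

definition self_adj :: "('a^'n \<Rightarrow> 'a^'n) \<Rightarrow> bool" where
  "self_adj T \<longleftrightarrow> (\<forall>x y. T x + T y = T (x + y)) \<and> (\<forall>c x. T (c *s x) = c *s T x)
     \<and> (\<forall>x y. hinner (T x) y = hinner x (T y))"

definition injective_frame :: "('m::finite \<Rightarrow> 'a^'n) \<Rightarrow> bool" where
  "injective_frame F \<longleftrightarrow>
     (\<forall>T. self_adj T \<and> (\<forall>k. hinner (T (F k)) (F k) = 0) \<longrightarrow> T = (\<lambda>_. 0))"

lemma ctrans_frame_op: "ctrans (frame_op F) = frame_op F"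
  by (simp add: ctrans_def frame_op_def vec_eq_iff cj_sum cj_mult mult.commute)

lemma frame_op_quadratic_form:
  "of_real (\<Sum>k\<in>UNIV. (norm (hinner x (F k)))^2) = hinner (frame_op F *v x) x"
proof -
  have "of_real (\<Sum>k\<in>UNIV. (norm (hinner x (F k)))^2) = (\<Sum>k\<in>UNIV. hinner x (F k) * cj (hinner x (F k)))"
    by (simp add: mult_cj)
  also have "\<dots> = (\<Sum>k\<in>UNIV. \<Sum>i\<in>UNIV. \<Sum>j\<in>UNIV. F k $ j * cj (F k $ i) * x $ i * cj (x $ j))"
    by (simp add: cj_hinner) (simp add: hinner_def sum_product mult_ac)
  also have "\<dots> = (\<Sum>i\<in>UNIV. \<Sum>j\<in>UNIV. \<Sum>k\<in>UNIV. F k $ j * cj (F k $ i) * x $ i * cj (x $ j))"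
    by (rule sum_rotate3)
  also have "\<dots> = (\<Sum>j\<in>UNIV. \<Sum>i\<in>UNIV. \<Sum>k\<in>UNIV. F k $ j * cj (F k $ i) * x $ i * cj (x $ j))"
    by (rule sum.swap)
  also have "\<dots> = hinner (frame_op F *v x) x"
    by (simp add: hinner_def frame_op_def matrix_vector_mult_def sum_distrib_right)
  finally show ?thesis .
qed

lemma parseval_iff_frame_op: "parseval F \<longleftrightarrow> frame_op F = mat 1"
proof
  assume "parseval F"
  then have "hinner ((frame_op F - mat 1) *v x) x = 0" for x
    using frame_op_quadratic_form[of x F]
    by (simp add: parseval_def hinner_self matrix_vector_mult_diff_rdistrib hinner_diff_left)
  moreover have "ctrans (frame_op F - mat 1) = frame_op F - mat 1"
    by (simp add: ctrans_diff ctrans_frame_op)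
  ultimately show "frame_op F = mat 1"
    using hermitian_eq_0_if_quadratic_form_0 by fastforce
next
  assume "frame_op F = mat 1"
  then have "of_real (\<Sum>k\<in>UNIV. (norm (hinner x (F k)))^2) = (of_real ((norm x)^2) :: 'a)" for x
    using frame_op_quadratic_form[of x F] by (simp add: hinner_self)
  then show "parseval F"
    unfolding parseval_def using of_real_eq_iff by blast
qed

lemma frame_op_matrix_mult: "frame_op (\<lambda>k. A *v G k) = A ** frame_op G ** ctrans A"
proof -
  have "frame_op (\<lambda>k. A *v G k) $ i $ j = (A ** frame_op G ** ctrans A) $ i $ j" for i j
  proof -
    have "frame_op (\<lambda>k. A *v G k) $ i $ j =
      (\<Sum>k\<in>UNIV. \<Sum>a\<in>UNIV. \<Sum>b\<in>UNIV. A$i$a * G k $ a * (cj (A$j$b) * cj (G k $ b)))"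
      by (simp add: frame_op_def matrix_vector_mult_def cj_sum cj_mult sum_product)
    also have "\<dots> = (\<Sum>a\<in>UNIV. \<Sum>b\<in>UNIV. \<Sum>k\<in>UNIV. A$i$a * G k $ a * (cj (A$j$b) * cj (G k $ b)))"
      by (rule sum_rotate3)
    also have "\<dots> = (\<Sum>b\<in>UNIV. \<Sum>a\<in>UNIV. \<Sum>k\<in>UNIV. A$i$a * G k $ a * (cj (A$j$b) * cj (G k $ b)))"
      by (rule sum.swap)
    also have "\<dots> = (A ** frame_op G ** ctrans A) $ i $ j"
      by (simp add: frame_op_def ctrans_def matrix_matrix_mult_def sum_distrib_left
          sum_distrib_right mult_ac)
    finally show ?thesis .
  qed
  then show ?thesis by (simp add: vec_eq_iff)
qed

lemma self_adj_add: "self_adj T \<Longrightarrow> T (x + y) = T x + T y"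
  by (simp add: self_adj_def)

lemma self_adj_scale: "self_adj T \<Longrightarrow> T (c *s x) = c *s T x"
  by (simp add: self_adj_def)

lemma self_adj_hinner_swap: "self_adj T \<Longrightarrow> hinner (T y) x = cj (hinner (T x) y)"
  by (simp add: self_adj_def cj_hinner)

lemma self_adj_matrix: "ctrans Y = Y \<Longrightarrow> self_adj (\<lambda>x. Y *v x)"
  unfolding self_adj_def by (metis hinner_matrix_left matrix_vector_right_distrib vec.scale)

definition coeff_matrix :: "('a^'n \<Rightarrow> 'a^'n) \<Rightarrow> 'a^'n^'n" where
  "coeff_matrix T = (\<chi> i j. T (axis j 1) $ i)"

lemma self_adj_eq_matrix:
  assumes "self_adj T" shows "T x = coeff_matrix T *v x"
proof -
  have lin: "Vector_Spaces.linear (*s) (*s) T"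
    using assms by unfold_locales (simp_all add: self_adj_def)
  have "T x = T (\<Sum>j\<in>UNIV. x$j *s axis j 1)" by (simp add: basis_expansion)
  also have "\<dots> = (\<Sum>j\<in>UNIV. x$j *s T (axis j 1))"
    by (simp add: vec.linear_sum[OF lin] vec.linear_scale[OF lin])
  also have "\<dots> = coeff_matrix T *v x"
    by (simp add: coeff_matrix_def matrix_vector_mult_def vec_eq_iff mult.commute)
  finally show ?thesis .
qed

lemma ctrans_coeff_matrix:
  assumes "self_adj T" shows "ctrans (coeff_matrix T) = coeff_matrix T"
proof -
  have "cj (T (axis i 1) $ j) = T (axis j 1) $ i" for i j
    using self_adj_hinner_swap[OF assms, of "axis j 1" "axis i 1"] by (simp add: hinner_axis_right)
  then show ?thesis by (simp add: ctrans_def coeff_matrix_def vec_eq_iff)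
qed

lemma injective_frame_iff_hermitian:
  "injective_frame G \<longleftrightarrow> (\<forall>Y. ctrans Y = Y \<and> (\<forall>k. hinner (Y *v G k) (G k) = 0) \<longrightarrow> Y = 0)"
proof
  assume inj: "injective_frame G"
  show "\<forall>Y. ctrans Y = Y \<and> (\<forall>k. hinner (Y *v G k) (G k) = 0) \<longrightarrow> Y = 0"
  proof (intro allI impI, elim conjE)
    fix Y assume "ctrans Y = Y" "\<forall>k. hinner (Y *v G k) (G k) = 0"
    then have "(\<lambda>x. Y *v x) = (\<lambda>_. 0)"
      using inj self_adj_matrix unfolding injective_frame_def by blast
    then show "Y = 0" by (simp add: matrix_eq_0_iff_mult fun_eq_iff)
  qed
next
  assume herm: "\<forall>Y. ctrans Y = Y \<and> (\<forall>k. hinner (Y *v G k) (G k) = 0) \<longrightarrow> Y = 0"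
  show "injective_frame G" unfolding injective_frame_def
  proof (intro allI impI, elim conjE)
    fix T assume T: "self_adj T" and "\<forall>k. hinner (T (G k)) (G k) = 0"
    then have "coeff_matrix T = 0"
      using herm ctrans_coeff_matrix[OF T] by (simp add: self_adj_eq_matrix[OF T, symmetric])
    then show "T = (\<lambda>_. 0)" using self_adj_eq_matrix[OF T] by auto
  qed
qed

lemma self_adj_eq_0_if_hinner_axis:
  assumes "self_adj T" and "\<And>a b. hinner (T (axis a 1)) (axis b 1) = 0"
  shows "T = (\<lambda>_. 0)"
proof -
  have "coeff_matrix T = 0"
    using assms(2) by (simp add: coeff_matrix_def vec_eq_iff hinner_axis_right)
  then show ?thesis using self_adj_eq_matrix[OF assms(1)] by auto
qed

lemma self_adj_quadratic_form_axis_pair: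
  assumes "self_adj T"
  shows "hinner (T (axis i 1 + c *s axis j 1)) (axis i 1 + c *s axis j 1)
    = hinner (T (axis i 1)) (axis i 1) + cj c * hinner (T (axis i 1)) (axis j 1)
      + c * hinner (T (axis j 1)) (axis i 1) + c * cj c * hinner (T (axis j 1)) (axis j 1)"
  using assms by (simp add: self_adj_add self_adj_scale hinner_add_left hinner_add_right
      hinner_scale_left hinner_scale_right algebra_simps)

lemma injective_frame_matrix_mult:
  assumes inj: "injective_frame G" and herm: "ctrans A = A"
    and AB: "A ** B = mat 1" and BA: "B ** A = mat 1"
  shows "injective_frame (\<lambda>k. A *v G k)"
  unfolding injective_frame_iff_hermitian
proof (intro allI impI, elim conjE)
  fix Y assume Y: "ctrans Y = Y" and zero: "\<forall>k. hinner (Y *v (A *v G k)) (A *v G k) = 0"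
  have "ctrans (A ** Y ** A) = A ** Y ** A"
    using Y herm by (simp add: ctrans_mult matrix_mul_assoc)
  moreover have "hinner ((A ** Y ** A) *v G k) (G k) = 0" for k
    using zero herm by (simp add: hinner_matrix_left flip: matrix_vector_mul_assoc)
  ultimately have "A ** Y ** A = 0" using inj by (simp add: injective_frame_iff_hermitian)
  then have "B ** (A ** Y ** A) ** B = 0" by simp
  then show "Y = 0" by (simp add: matrix_mul_assoc BA) (simp flip: matrix_mul_assoc add: AB)
qed

end

section \<open>Matrix norms and the inverse square root series\<close>

lemma norm_vec_sq: "(norm x)^2 = (\<Sum>i\<in>UNIV. (norm (x$i))^2)"
  by (simp add: norm_vec_def L2_set_def sum_nonneg)

lemma norm_sum_mult_le:
  fixes a b :: "'a::real_normed_field^'k"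
  shows "norm (\<Sum>k\<in>UNIV. a$k * b$k) \<le> norm a * norm b"
proof -
  have "norm (\<Sum>k\<in>UNIV. a$k * b$k) \<le> (\<Sum>k\<in>UNIV. \<bar>norm (a$k)\<bar> * \<bar>norm (b$k)\<bar>)"
    by (rule order_trans[OF norm_sum]) (simp add: norm_mult)
  also have "\<dots> \<le> L2_set (\<lambda>k. norm (a$k)) UNIV * L2_set (\<lambda>k. norm (b$k)) UNIV"
    by (rule L2_set_mult_ineq)
  finally show ?thesis by (simp add: norm_vec_def)
qed

lemma norm_matrix_vector_mult_le:
  fixes A :: "'a::real_normed_field^'k^'i"
  shows "norm (A *v x) \<le> norm A * norm x"
proof -
  have entry: "norm ((A *v x)$i) \<le> norm (A$i) * norm x" for i
    using norm_sum_mult_le[of "A$i" x] by (simp add: matrix_vector_mult_def)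
  have "(norm (A *v x))^2 = (\<Sum>i\<in>UNIV. (norm ((A *v x)$i))^2)" by (rule norm_vec_sq)
  also have "\<dots> \<le> (\<Sum>i\<in>UNIV. (norm (A$i) * norm x)^2)"
    by (intro sum_mono power_mono entry) simp
  also have "\<dots> = (norm A * norm x)^2"
    by (simp add: power_mult_distrib sum_distrib_right[symmetric] norm_vec_sq[of A])
  finally show ?thesis by (rule power2_le_imp_le) simp
qed

lemma norm_matrix_mult_le:
  fixes A :: "'a::real_normed_field^'k^'i" and B :: "'a^'j^'k"
  shows "norm (A ** B) \<le> norm A * norm B"
proof -
  have entry: "norm ((A ** B)$i$j) \<le> norm (A$i) * norm (column j B)" for i j
    using norm_sum_mult_le[of "A$i" "column j B"] by (simp add: matrix_matrix_mult_def column_def)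
  have "(norm (A ** B))^2 = (\<Sum>i\<in>UNIV. \<Sum>j\<in>UNIV. (norm ((A ** B)$i$j))^2)"
    by (simp add: norm_vec_sq[of "A ** B"] norm_vec_sq[of "(A ** B) $ _"])
  also have "\<dots> \<le> (\<Sum>i\<in>UNIV. \<Sum>j\<in>UNIV. (norm (A$i) * norm (column j B))^2)"
    by (intro sum_mono power_mono entry) simp
  also have "\<dots> = (\<Sum>i\<in>UNIV. (norm (A$i))^2) * (\<Sum>j\<in>UNIV. (norm (column j B))^2)"
    by (simp add: power_mult_distrib sum_product)
  also have "(\<Sum>j\<in>UNIV. (norm (column j B))^2) = (\<Sum>j\<in>UNIV. \<Sum>k\<in>UNIV. (norm (B$k$j))^2)"
    by (simp only: column_def norm_vec_sq vec_lambda_beta)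
  also have "\<dots> = (norm B)^2"
    by (subst sum.swap) (simp add: norm_vec_sq[of B] norm_vec_sq[of "B $ _"])
  also have "(\<Sum>i\<in>UNIV. (norm (A$i))^2) = (norm A)^2" by (simp add: norm_vec_sq[of A])
  finally show ?thesis
    by (metis mult_nonneg_nonneg norm_ge_zero power2_le_imp_le power_mult_distrib)
qed

lemma matrix_add_rdistrib: "(A + B) ** C = A ** C + B ** (C::'a::semiring_1^'j^'k)"
  by (simp add: vec_eq_iff matrix_matrix_mult_def distrib_right sum.distrib)

lemma matrix_diff_rdistrib: "(A - B) ** C = A ** C - B ** (C::'a::ring_1^'j^'k)"
  by (simp add: vec_eq_iff matrix_matrix_mult_def left_diff_distrib sum_subtractf)

lemma matrix_mult_sum_left: "(\<Sum>i\<in>I. f i) ** Y = (\<Sum>i\<in>I. f i ** (Y::'a::semiring_1^'j^'k))"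
  by (induction I rule: infinite_finite_induct) (simp_all add: matrix_add_rdistrib)

lemma matrix_mult_sum_right: "X ** (\<Sum>i\<in>I. f i) = (\<Sum>i\<in>I. X ** (f i::'a::semiring_1^'j^'k))"
  by (induction I rule: infinite_finite_induct) (simp_all add: matrix_add_ldistrib)

lemma bounded_bilinear_matrix_mult:
  "bounded_bilinear (\<lambda>(X::'a::real_normed_field^'k^'i) (Y::'a^'j^'k). X ** Y)"
  by (rule bounded_bilinear.intro)
     (auto simp: matrix_add_ldistrib matrix_add_rdistrib scalar_matrix_assoc matrix_scalar_ac
       intro!: exI[of _ 1] norm_matrix_mult_le)

primrec mat_pow :: "'a::semiring_1^'n^'n \<Rightarrow> nat \<Rightarrow> 'a^'n^'n" where
  "mat_pow E 0 = mat 1"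
| "mat_pow E (Suc k) = E ** mat_pow E k"

lemma mat_pow_add: "mat_pow E (i + j) = mat_pow E i ** mat_pow E j"
  by (induction i) (simp_all add: matrix_mul_assoc)

lemma mat_pow_commute: "E ** mat_pow E k = mat_pow E k ** E"
  by (induction k) (simp_all add: matrix_mul_assoc)

lemma norm_mat_pow_Suc_le: "norm (mat_pow E (Suc k)) \<le> norm (E::'a::real_normed_field^'n^'n) ^ Suc k"
proof (induction k)
  case (Suc k)
  have "norm (mat_pow E (Suc (Suc k))) \<le> norm E * norm (mat_pow E (Suc k))"
    by (simp only: mat_pow.simps(2)[of E "Suc k"] norm_matrix_mult_le)
  also have "\<dots> \<le> norm E * norm E ^ Suc k"
    by (intro mult_left_mono Suc.IH) simp
  finally show ?case by simp
qed simp

lemma norm_mat_pow_le: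
  fixes E :: "'a::real_normed_field^'n^'n"
  shows "norm (mat_pow E k) \<le> (1 + norm (mat 1 :: 'a^'n^'n)) * norm E ^ k"
proof (cases k)
  case 0 then show ?thesis by simp
next
  case (Suc j)
  then have "norm (mat_pow E k) \<le> 1 * norm E ^ k" using norm_mat_pow_Suc_le[of E j] by simp
  also have "\<dots> \<le> (1 + norm (mat 1 :: 'a^'n^'n)) * norm E ^ k"
    by (intro mult_right_mono) simp_all
  finally show ?thesis .
qed

lemma alternating_mat_pow_sum_mult:
  "(\<Sum>k<N. ((-1::real)^k) *\<^sub>R mat_pow E k) ** (mat 1 + E)
     = mat 1 - ((-1::real)^N) *\<^sub>R mat_pow (E::'a::real_normed_field^'n^'n) N"
proof (induction N)
  case (Suc N)
  have "mat_pow E N ** (mat 1 + E) = mat_pow E N + mat_pow E (Suc N)"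
    by (simp add: matrix_add_ldistrib mat_pow_commute[symmetric])
  with Suc.IH show ?case
    by (simp add: matrix_add_rdistrib scalar_matrix_assoc[symmetric] scaleR_right_distrib
        del: mat_pow.simps(2))
qed simp

definition isqrt_coeff :: "nat \<Rightarrow> real" where
  "isqrt_coeff k = ((-1/2::real) gchoose k)"

lemma abs_isqrt_coeff_le_1: "\<bar>isqrt_coeff k\<bar> \<le> 1"
proof (induction k)
  case (Suc k)
  have "isqrt_coeff (Suc k) = isqrt_coeff k * ((-1/2 - real k) / (real k + 1))"
    by (simp add: isqrt_coeff_def gbinomial_Suc_rec)
  moreover have "\<bar>(-1/2 - real k) / (real k + 1)\<bar> \<le> 1"
    by (simp add: abs_if field_simps)
  ultimately have "\<bar>isqrt_coeff (Suc k)\<bar> \<le> 1 * 1"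
    by (simp only: abs_mult, intro mult_mono Suc.IH) simp_all
  then show ?case by simp
qed (simp add: isqrt_coeff_def)

text \<open>The coefficient form of \<open>(1 + x)^(-1/2) * (1 + x)^(-1/2) = (1 + x)^(-1)\<close>.\<close>

lemma isqrt_coeff_convolution: "(\<Sum>i\<le>k. isqrt_coeff i * isqrt_coeff (k - i)) = (-1)^k"
proof -
  have "(\<Sum>i\<le>k. isqrt_coeff i * isqrt_coeff (k - i))
      = (\<Sum>i=0..k. ((-1/2::real) gchoose i) * ((-1/2) gchoose (k - i)))"
    by (simp add: isqrt_coeff_def atLeast0AtMost)
  also have "\<dots> = (- 1 gchoose k)" using gbinomial_Vandermonde[of "-1/2::real" "-1/2" k] by simp
  also have "\<dots> = (-1)^k" by (simp add: gbinomial_minus binomial_gbinomial[symmetric])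
  finally show ?thesis .
qed

lemma isqrt_partial_sum_square:
  fixes E :: "'a::real_normed_field^'n^'n" and N :: nat
  assumes "norm E \<le> 1"
  defines "P \<equiv> (\<Sum>k<N. isqrt_coeff k *\<^sub>R mat_pow E k)"
  shows "norm (P ** P - (\<Sum>k<N. ((-1::real)^k) *\<^sub>R mat_pow E k))
           \<le> real N * real N * ((1 + norm (mat 1 :: 'a^'n^'n)) * norm E ^ N)"
proof -
  let ?t = "\<lambda>(i, j). (isqrt_coeff i * isqrt_coeff j) *\<^sub>R mat_pow E (i + j)"
  define D where "D = ({..<N} \<times> {..<N}) - {(i, j). i + j < N}"
  define K where "K = 1 + norm (mat 1 :: 'a^'n^'n)"
  have PP: "P ** P = sum ?t ({..<N} \<times> {..<N})"
    unfolding P_def matrix_mult_sum_left matrix_mult_sum_right sum.cartesian_product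
    by (simp add: scalar_matrix_assoc[symmetric] matrix_scalar_ac flip: mat_pow_add)
       (simp add: add.commute mult.commute)
  \<comment> \<open>The terms with \<open>i + j < N\<close> form the Cauchy product, which is the alternating series.\<close>
  have "sum ?t {(i, j). i + j < N}
      = (\<Sum>k<N. \<Sum>i\<le>k. (isqrt_coeff i * isqrt_coeff (k - i)) *\<^sub>R mat_pow E (i + (k - i)))"
    by (rule sum.triangle_reindex)
  also have "\<dots> = (\<Sum>k<N. ((-1::real)^k) *\<^sub>R mat_pow E k)"
  proof -
    have "(\<Sum>i\<le>k. (isqrt_coeff i * isqrt_coeff (k - i)) *\<^sub>R mat_pow E (i + (k - i)))
        = (\<Sum>i\<le>k. isqrt_coeff i * isqrt_coeff (k - i)) *\<^sub>R mat_pow E k" for k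
      by (auto simp: scaleR_sum_left intro!: sum.cong)
    then show ?thesis by (simp add: isqrt_coeff_convolution)
  qed
  finally have cauchy: "sum ?t {(i, j). i + j < N} = (\<Sum>k<N. ((-1::real)^k) *\<^sub>R mat_pow E k)" .
  have "P ** P - (\<Sum>k<N. ((-1::real)^k) *\<^sub>R mat_pow E k) = sum ?t D"
  proof -
    have "{(i, j). i + j < N} \<subseteq> {..<N} \<times> {..<N}" by auto
    then show ?thesis
      unfolding PP cauchy[symmetric] D_def by (simp add: sum.subset_diff[of _ "{..<N} \<times> {..<N}"])
  qed
  also have "norm (sum ?t D) \<le> (\<Sum>x\<in>D. K * norm E ^ N)"
  proof (rule sum_norm_le)
    fix x assume "x \<in> D"
    then obtain i j where x: "x = (i, j)" and ij: "N \<le> i + j" by (auto simp: D_def)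
    have "norm (?t x) \<le> (\<bar>isqrt_coeff i\<bar> * \<bar>isqrt_coeff j\<bar>) * (K * norm E ^ (i + j))"
      using norm_mat_pow_le[of E "i + j"] by (simp add: x abs_mult mult_left_mono K_def)
    also have "\<dots> \<le> 1 * (K * norm E ^ N)"
      using assms ij
      by (intro mult_mono mult_left_mono power_decreasing)
         (simp_all add: abs_isqrt_coeff_le_1 mult_le_one K_def)
    finally show "norm (?t x) \<le> K * norm E ^ N" by simp
  qed
  also have "\<dots> \<le> real N * real N * (K * norm E ^ N)"
  proof -
    have "card D \<le> card ({..<N} \<times> {..<N})" unfolding D_def by (rule card_mono) auto
    then have "real (card D) \<le> real N * real N" by (simp flip: of_nat_mult)
    then show ?thesis by (simp add: mult_right_mono K_def)
  qed
  finally show ?thesis by (simp add: K_def)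
qed

definition mat_isqrt :: "'a::{real_normed_field,banach}^'n^'n \<Rightarrow> 'a^'n^'n" where
  "mat_isqrt E = (\<Sum>k. isqrt_coeff k *\<^sub>R mat_pow E k)"

context
  fixes E :: "'a::{real_normed_field,banach}^'n^'n"
  assumes norm_E: "norm E < 1"
begin

lemma summable_isqrt_series: "summable (\<lambda>k. isqrt_coeff k *\<^sub>R mat_pow E k)"
proof (rule summable_comparison_test')
  show "summable (\<lambda>k. (1 + norm (mat 1 :: 'a^'n^'n)) * norm E ^ k)"
    using norm_E by (intro summable_mult summable_geometric) simp
  have "norm (isqrt_coeff k *\<^sub>R mat_pow E k) \<le> 1 * ((1 + norm (mat 1 :: 'a^'n^'n)) * norm E ^ k)" for k
    by (simp only: norm_scaleR, intro mult_mono abs_isqrt_coeff_le_1 norm_mat_pow_le) simp_all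
  then show "norm (isqrt_coeff k *\<^sub>R mat_pow E k) \<le> (1 + norm (mat 1 :: 'a^'n^'n)) * norm E ^ k"
    for k by simp
qed

lemma mat_isqrt_commute: "mat_isqrt E ** E = E ** mat_isqrt E"
proof -
  have "mat_isqrt E ** E = (\<Sum>k. (isqrt_coeff k *\<^sub>R mat_pow E k) ** E)"
    unfolding mat_isqrt_def
    by (rule bounded_linear.suminf[OF bounded_bilinear.bounded_linear_left
          [OF bounded_bilinear_matrix_mult] summable_isqrt_series])
  also have "\<dots> = (\<Sum>k. E ** (isqrt_coeff k *\<^sub>R mat_pow E k))"
    by (simp add: scalar_matrix_assoc[symmetric] matrix_scalar_ac mat_pow_commute)
  also have "\<dots> = E ** mat_isqrt E"
    unfolding mat_isqrt_def
    by (rule bounded_linear.suminf[OF bounded_bilinear.bounded_linear_right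
          [OF bounded_bilinear_matrix_mult] summable_isqrt_series, symmetric])
  finally show ?thesis .
qed

lemma norm_mat_isqrt_minus_1: "norm (mat_isqrt E - mat 1) \<le> norm E / (1 - norm E)"
proof -
  have "mat_isqrt E - mat 1 = (\<Sum>k. isqrt_coeff (Suc k) *\<^sub>R mat_pow E (Suc k))"
    using suminf_split_head[OF summable_isqrt_series] by (simp add: mat_isqrt_def isqrt_coeff_def)
  moreover have "norm (\<Sum>k. isqrt_coeff (Suc k) *\<^sub>R mat_pow E (Suc k)) \<le> (\<Sum>k. norm E * norm E ^ k)"
  proof (rule norm_suminf_le)
    have "norm (isqrt_coeff (Suc k) *\<^sub>R mat_pow E (Suc k)) \<le> 1 * norm E ^ Suc k" for k
      by (simp only: norm_scaleR, intro mult_mono abs_isqrt_coeff_le_1 norm_mat_pow_Suc_le) simp_all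
    then show "norm (isqrt_coeff (Suc k) *\<^sub>R mat_pow E (Suc k)) \<le> norm E * norm E ^ k" for k
      by simp
    show "summable (\<lambda>k. norm E * norm E ^ k)"
      using norm_E by (intro summable_mult summable_geometric) simp
  qed
  moreover have "(\<Sum>k. norm E * norm E ^ k) = norm E / (1 - norm E)"
    using norm_E by (simp add: suminf_mult suminf_geometric divide_simps)
  ultimately show ?thesis by simp
qed

lemma mat_isqrt_square: "mat_isqrt E ** mat_isqrt E ** (mat 1 + E) = mat 1"
proof -
  define P where "P N = (\<Sum>k<N. isqrt_coeff k *\<^sub>R mat_pow E k)" for N
  define Q where "Q N = (\<Sum>k<N. ((-1::real)^k) *\<^sub>R mat_pow E k)" for N
  define K where "K = 1 + norm (mat 1 :: 'a^'n^'n)"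
  have "(\<lambda>N. P N ** P N ** (mat 1 + E)) \<longlonglongrightarrow> mat_isqrt E ** mat_isqrt E ** (mat 1 + E)"
  proof -
    have "P \<longlonglongrightarrow> mat_isqrt E"
      unfolding P_def mat_isqrt_def by (rule summable_LIMSEQ[OF summable_isqrt_series])
    then show ?thesis
      by (intro bounded_bilinear.tendsto[OF bounded_bilinear_matrix_mult] tendsto_const)
  qed
  moreover have "(\<lambda>N. P N ** P N ** (mat 1 + E)) \<longlonglongrightarrow> mat 1"
  proof -
    have "(\<lambda>N. K * norm E ^ N) \<longlonglongrightarrow> 0"
      using norm_E by (intro tendsto_mult_right_zero LIMSEQ_power_zero) simp
    then have "(\<lambda>N. ((-1::real)^N) *\<^sub>R mat_pow E N) \<longlonglongrightarrow> 0"
      by (rule Lim_null_comparison[rotated]) (use norm_mat_pow_le[of E] in \<open>simp add: K_def\<close>)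
    then have "(\<lambda>N. mat 1 - ((-1::real)^N) *\<^sub>R mat_pow E N) \<longlonglongrightarrow> mat 1 - 0"
      by (intro tendsto_diff tendsto_const)
    then have lim_Q: "(\<lambda>N. Q N ** (mat 1 + E)) \<longlonglongrightarrow> mat 1"
      by (simp add: Q_def alternating_mat_pow_sum_mult)
    have "(\<lambda>N. real N * sqrt (norm E) ^ N) \<longlonglongrightarrow> 0"
      using powser_times_n_limit_0[of "sqrt (norm E)"] norm_E by simp
    then have "(\<lambda>N. (real N * sqrt (norm E) ^ N)^2 * K * norm (mat 1 + E)) \<longlonglongrightarrow> 0"
      by (intro tendsto_mult_left_zero) (simp add: tendsto_null_power)
    moreover have "(real N * sqrt (norm E) ^ N)^2 = real N * real N * norm E ^ N" for N
      by (simp add: power_mult_distrib power2_eq_square flip: power_mult_distrib)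
    ultimately have lim_bound: "(\<lambda>N. real N * real N * (K * norm E ^ N) * norm (mat 1 + E)) \<longlonglongrightarrow> 0"
      by (simp add: mult_ac)
    have bound: "norm (P N ** P N ** (mat 1 + E) - Q N ** (mat 1 + E))
        \<le> real N * real N * (K * norm E ^ N) * norm (mat 1 + E)" for N
    proof -
      have "P N ** P N ** (mat 1 + E) - Q N ** (mat 1 + E) = (P N ** P N - Q N) ** (mat 1 + E)"
        by (simp add: matrix_diff_rdistrib)
      then show ?thesis
        using isqrt_partial_sum_square[of E N] norm_E
        by (auto simp: P_def Q_def K_def intro!: order_trans[OF norm_matrix_mult_le] mult_right_mono)
    qed
    have "(\<lambda>N. P N ** P N ** (mat 1 + E) - Q N ** (mat 1 + E)) \<longlonglongrightarrow> 0"
      by (rule Lim_null_comparison[OF always_eventually lim_bound]) (use bound in blast)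
    with lim_Q show ?thesis by (rule Lim_transform)
  qed
  ultimately show ?thesis by (rule LIMSEQ_unique)
qed

end

context conj_field
begin

lemma ctrans_mat_pow: "ctrans E = E \<Longrightarrow> ctrans (mat_pow E k) = mat_pow E k"
  by (induction k) (simp_all add: ctrans_mult mat_pow_commute)

lemma norm_ctrans: "norm (ctrans A) = norm (A::'a^'c^'r)"
proof -
  have "(norm (ctrans A))^2 = (\<Sum>i\<in>UNIV. \<Sum>j\<in>UNIV. (norm (A$j$i))^2)"
    unfolding ctrans_def by (simp only: norm_vec_sq vec_lambda_beta norm_cj)
  also have "\<dots> = (norm A)^2"
    by (subst sum.swap) (simp add: norm_vec_sq[of A] norm_vec_sq[of "A $ _"])
  finally show ?thesis by (simp add: power2_eq_iff_nonneg)
qed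

lemma ctrans_mat_isqrt:
  assumes "ctrans E = E" "norm E < 1" shows "ctrans (mat_isqrt E) = mat_isqrt E"
proof -
  have "bounded_linear (ctrans :: 'a^'n^'n \<Rightarrow> 'a^'n^'n)"
    by (rule bounded_linear_intro[where K=1]) (simp_all add: ctrans_add ctrans_scaleR norm_ctrans)
  then have "ctrans (mat_isqrt E) = (\<Sum>k. ctrans (isqrt_coeff k *\<^sub>R mat_pow E k))"
    unfolding mat_isqrt_def by (rule bounded_linear.suminf[OF _ summable_isqrt_series[OF assms(2)]])
  also have "\<dots> = mat_isqrt E" by (simp add: ctrans_scaleR ctrans_mat_pow[OF assms(1)] mat_isqrt_def)
  finally show ?thesis .
qed

end

section \<open>Injectivity along polynomial paths\<close>

context conj_field
begin

definition real_poly_fun :: "(real \<Rightarrow> 'a) \<Rightarrow> bool" where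
  "real_poly_fun f \<longleftrightarrow> (\<exists>p. \<forall>t. f t = poly p (of_real t))"

lemma real_poly_fun_const: "real_poly_fun (\<lambda>t. c)"
  unfolding real_poly_fun_def by (rule exI[of _ "[:c:]"]) simp

lemma real_poly_fun_affine: "real_poly_fun (\<lambda>t. a + t *\<^sub>R b)"
  unfolding real_poly_fun_def by (rule exI[of _ "[:a, b:]"]) (simp add: scaleR_conv_of_real)

lemma real_poly_fun_add: "real_poly_fun f \<Longrightarrow> real_poly_fun g \<Longrightarrow> real_poly_fun (\<lambda>t. f t + g t)"
  unfolding real_poly_fun_def by (metis poly_add)

lemma real_poly_fun_mult: "real_poly_fun f \<Longrightarrow> real_poly_fun g \<Longrightarrow> real_poly_fun (\<lambda>t. f t * g t)"
  unfolding real_poly_fun_def by (metis poly_mult)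

lemma real_poly_fun_sum:
  "(\<And>x. x \<in> A \<Longrightarrow> real_poly_fun (f x)) \<Longrightarrow> real_poly_fun (\<lambda>t. \<Sum>x\<in>A. f x t)"
  by (induction A rule: infinite_finite_induct) (simp_all add: real_poly_fun_const real_poly_fun_add)

lemma real_poly_fun_prod:
  "(\<And>x. x \<in> A \<Longrightarrow> real_poly_fun (f x)) \<Longrightarrow> real_poly_fun (\<lambda>t. \<Prod>x\<in>A. f x t)"
  by (induction A rule: infinite_finite_induct) (simp_all add: real_poly_fun_const real_poly_fun_mult)

lemma real_poly_fun_cj: "real_poly_fun f \<Longrightarrow> real_poly_fun (\<lambda>t. cj (f t))"
proof -
  have "poly (map_poly cj p) (of_real t) = cj (poly p (of_real t))" for p t
    by (induction p rule: pCons_induct) (simp_all add: map_poly_pCons cj_add cj_mult)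
  then show "real_poly_fun f \<Longrightarrow> real_poly_fun (\<lambda>t. cj (f t))"
    unfolding real_poly_fun_def by metis
qed

lemma inj_matrix_iff_det_gram:
  fixes L :: "'a^'A::finite^'B::finite"
  shows "inj ((*v) L) \<longleftrightarrow> det (ctrans L ** L) \<noteq> 0"
proof -
  have "(ctrans L ** L) *v x = 0 \<longleftrightarrow> L *v x = 0" for x
  proof
    assume "(ctrans L ** L) *v x = 0"
    then have "hinner (L *v x) (L *v x) = 0"
      by (simp add: hinner_matrix_left matrix_vector_mul_assoc) (simp add: hinner_def)
    then show "L *v x = 0" by (simp add: hinner_self_eq_0)
  qed (simp flip: matrix_vector_mul_assoc)
  then have "inj ((*v) (ctrans L ** L)) \<longleftrightarrow> inj ((*v) L)"
    by (simp add: vec.linear_inj_iff_eq_0[OF matrix_vector_mul_linear_gen])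
  then show ?thesis
    using det_nz_iff_inj_gen[OF matrix_vector_mul_linear_gen[of "ctrans L ** L"]] by simp
qed

text \<open>Along a polynomial path, \<open>det (L* L)\<close> is a real polynomial, nonzero at \<open>t\<^sub>0\<close>.\<close>

lemma finite_non_injective_params:
  fixes L :: "real \<Rightarrow> 'a^'A::finite^'B::finite"
  assumes poly_L: "\<And>b a. real_poly_fun (\<lambda>t. L t $ b $ a)" and inj_t0: "inj ((*v) (L t\<^sub>0))"
  shows "finite {t. \<not> inj ((*v) (L t))}"
proof -
  have "real_poly_fun (\<lambda>t. (ctrans (L t) ** L t) $ i $ j)" for i j
    unfolding ctrans_def matrix_matrix_mult_def
    by (simp, intro real_poly_fun_sum real_poly_fun_mult real_poly_fun_cj poly_L)
  then have "real_poly_fun (\<lambda>t. det (ctrans (L t) ** L t))"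
    unfolding det_def
    by (intro real_poly_fun_sum real_poly_fun_mult real_poly_fun_prod real_poly_fun_const)
  then obtain p where p: "\<And>t. det (ctrans (L t) ** L t) = poly p (of_real t)"
    unfolding real_poly_fun_def by blast
  have "p \<noteq> 0" using inj_t0 p[of t\<^sub>0] by (auto simp: inj_matrix_iff_det_gram)
  then have "finite (of_real -` {z. poly p z = 0} :: real set)"
    by (intro finite_vimageI poly_roots_finite inj_of_real)
  moreover have "{t. \<not> inj ((*v) (L t))} \<subseteq> of_real -` {z. poly p z = 0}"
    using p by (auto simp: inj_matrix_iff_det_gram)
  ultimately show ?thesis by (rule finite_subset[rotated])
qed

end

section \<open>Approximation by injective Parseval frames\<close>

lemma frame_dist_le:
  assumes "\<And>k. norm (F k - G k) \<le> b k"
  shows "frame_dist F G \<le> sqrt (\<Sum>k\<in>UNIV. (b k)^2)"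
  unfolding frame_dist_def by (intro real_sqrt_le_mono sum_mono power_mono assms) simp

context conj_field
begin

definition frame_cross_op :: "('m::finite \<Rightarrow> 'a^'n) \<Rightarrow> ('m \<Rightarrow> 'a^'n) \<Rightarrow> 'a^'n^'n" where
  "frame_cross_op F D = (\<chi> i j. \<Sum>k\<in>UNIV. F k $ i * cj (D k $ j) + D k $ i * cj (F k $ j))"

lemma frame_op_affine:
  "frame_op (\<lambda>k. F k + t *\<^sub>R D k) = frame_op F + t *\<^sub>R frame_cross_op F D + t^2 *\<^sub>R frame_op D"
proof -
  have "(F k $ i + t *\<^sub>R D k $ i) * cj (F k $ j + t *\<^sub>R D k $ j)
      = F k $ i * cj (F k $ j) + t *\<^sub>R (F k $ i * cj (D k $ j) + D k $ i * cj (F k $ j))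
        + t^2 *\<^sub>R (D k $ i * cj (D k $ j))" for k i j
    by (simp add: cj_add cj_mult scaleR_conv_of_real algebra_simps power2_eq_square)
  then show ?thesis
    by (simp add: vec_eq_iff frame_op_def frame_cross_op_def sum.distrib scaleR_sum_right[symmetric])
qed

text \<open>\<open>A (I + E) A = I\<close> for \<open>A = (I + E)\<^sup>-\<^sup>1\<^sup>/\<^sup>2\<close>, and \<open>A\<close> is Hermitian and invertible.\<close>

lemma parseval_normalization:
  assumes S: "frame_op G = mat 1 + E" and norm_E: "norm E < 1"
  defines "A \<equiv> mat_isqrt E"
  shows "parseval (\<lambda>k. A *v G k)"
    and "injective_frame G \<Longrightarrow> injective_frame (\<lambda>k. A *v G k)"
    and "norm (A *v G k - G k) \<le> norm E / (1 - norm E) * norm (G k)"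
proof -
  have "ctrans E = E"
    using ctrans_frame_op[of G] by (simp add: S ctrans_add)
  then have herm: "ctrans A = A" unfolding A_def by (rule ctrans_mat_isqrt[OF _ norm_E])
  have square: "A ** A ** (mat 1 + E) = mat 1"
    unfolding A_def by (rule mat_isqrt_square[OF norm_E])
  have commute: "A ** (mat 1 + E) = (mat 1 + E) ** A"
    by (simp add: A_def matrix_add_ldistrib matrix_add_rdistrib mat_isqrt_commute[OF norm_E])
  define B where "B = A ** (mat 1 + E)"
  have AB: "A ** B = mat 1" using square by (simp add: B_def matrix_mul_assoc)
  have BA: "B ** A = mat 1"
    using square by (simp add: B_def commute matrix_mul_assoc flip: matrix_mul_assoc[of A])
  show "parseval (\<lambda>k. A *v G k)"
    using BA by (simp add: parseval_iff_frame_op frame_op_matrix_mult S herm B_def)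
  show "injective_frame G \<Longrightarrow> injective_frame (\<lambda>k. A *v G k)"
    by (rule injective_frame_matrix_mult[OF _ herm AB BA])
  have "norm (A *v G k - G k) = norm ((A - mat 1) *v G k)"
    by (simp add: matrix_vector_mult_diff_rdistrib)
  also have "\<dots> \<le> norm E / (1 - norm E) * norm (G k)"
    unfolding A_def
    by (intro order_trans[OF norm_matrix_vector_mult_le] mult_right_mono norm_mat_isqrt_minus_1
        norm_E) simp
  finally show "norm (A *v G k - G k) \<le> norm E / (1 - norm E) * norm (G k)" .
qed

end

context conj_field
begin

lemma normalized_affine_frame_near:
  fixes F D :: "'m::finite \<Rightarrow> 'a^'n" and t :: real
  defines "\<rho> \<equiv> \<bar>t\<bar> * norm (frame_cross_op F D) + t^2 * norm (frame_op D)"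
  assumes parseval_F: "parseval F" and \<rho>_small: "\<rho> < 1/2"
  obtains G' where "parseval G'"
    and "injective_frame (\<lambda>k. F k + t *\<^sub>R D k) \<Longrightarrow> injective_frame G'"
    and "\<And>k. norm (F k - G' k) \<le> \<bar>t\<bar> * norm (D k) + \<rho> / (1 - \<rho>) * (norm (F k) + \<bar>t\<bar> * norm (D k))"
proof -
  define G where "G = (\<lambda>k. F k + t *\<^sub>R D k)"
  define E where "E = frame_op G - mat 1"
  have S: "frame_op G = mat 1 + E" by (simp add: E_def)
  have "norm E \<le> \<rho>"
    using norm_triangle_ineq[of "t *\<^sub>R frame_cross_op F D" "t^2 *\<^sub>R frame_op D"] parseval_F
    by (simp add: E_def G_def \<rho>_def frame_op_affine parseval_iff_frame_op)
  moreover have "0 \<le> \<rho>" by (simp add: \<rho>_def)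
  ultimately have norm_E: "norm E < 1" and ratio: "norm E / (1 - norm E) \<le> \<rho> / (1 - \<rho>)"
    using \<rho>_small by (auto intro: frac_le)
  define G' where "G' = (\<lambda>k. mat_isqrt E *v G k)"
  have "norm (F k - G' k) \<le> \<bar>t\<bar> * norm (D k) + \<rho> / (1 - \<rho>) * (norm (F k) + \<bar>t\<bar> * norm (D k))" for k
  proof -
    have "norm (G' k - G k) \<le> norm E / (1 - norm E) * norm (G k)"
      unfolding G'_def by (rule parseval_normalization(3)[OF S norm_E])
    also have "\<dots> \<le> \<rho> / (1 - \<rho>) * (norm (F k) + \<bar>t\<bar> * norm (D k))"
      using ratio norm_E \<open>0 \<le> \<rho>\<close> \<rho>_small norm_triangle_ineq[of "F k" "t *\<^sub>R D k"]
      by (intro mult_mono) (simp_all add: G_def)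
    finally have "norm (G' k - G k) \<le> \<rho> / (1 - \<rho>) * (norm (F k) + \<bar>t\<bar> * norm (D k))" .
    moreover have "norm (F k - G' k) \<le> norm (G' k - G k) + norm (t *\<^sub>R D k)"
      using norm_triangle_ineq4[of "- (G' k - G k)" "t *\<^sub>R D k"] by (simp add: G_def norm_minus_commute)
    ultimately show ?thesis by simp
  qed
  moreover have "parseval G'" and "injective_frame G \<Longrightarrow> injective_frame G'"
    using parseval_normalization(1,2)[OF S norm_E] by (simp_all add: G'_def)
  ultimately show ?thesis using that by (simp add: G_def)
qed

lemma parseval_injective_approx:
  fixes F H :: "'m::finite \<Rightarrow> 'a^'n" and L :: "('m \<Rightarrow> 'a^'n) \<Rightarrow> 'a^'A::finite^'B::finite"
  assumes L_inj: "\<And>G. injective_frame G \<longleftrightarrow> inj ((*v) (L G))"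
    and L_poly: "\<And>b a. real_poly_fun (\<lambda>t. L (\<lambda>k. F k + t *\<^sub>R (H k - F k)) $ b $ a)"
    and inj_H: "injective_frame H" and parseval_F: "parseval F" and "e > 0"
  shows "\<exists>G. parseval G \<and> injective_frame G \<and> frame_dist F G < e"
proof -
  define D where "D k = H k - F k" for k
  define \<rho> where "\<rho> t = \<bar>t\<bar> * norm (frame_cross_op F D) + t^2 * norm (frame_op D)" for t :: real
  define \<beta> where "\<beta> t k = \<bar>t\<bar> * norm (D k) + \<rho> t / (1 - \<rho> t) * (norm (F k) + \<bar>t\<bar> * norm (D k))"
    for t k
  have "finite {t. \<not> inj ((*v) (L (\<lambda>k. F k + t *\<^sub>R D k)))}"
    using L_poly inj_H by (intro finite_non_injective_params[where t\<^sub>0 = 1]) (auto simp: D_def L_inj)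
  then have ev_inj: "\<forall>\<^sub>F t in at 0. injective_frame (\<lambda>k. F k + t *\<^sub>R D k)"
    using islimpt_finite islimpt_iff_eventually L_inj by fastforce
  have "(\<rho> \<longlongrightarrow> \<rho> 0) (at 0)" unfolding \<rho>_def by (intro tendsto_intros)
  then have ev_\<rho>: "\<forall>\<^sub>F t in at 0. \<rho> t < 1/2"
    by (rule order_tendstoD(2)) (simp add: \<rho>_def)
  have "((\<lambda>t. sqrt (\<Sum>k\<in>UNIV. (\<beta> t k)^2)) \<longlongrightarrow> sqrt (\<Sum>k\<in>UNIV. (\<beta> 0 k)^2)) (at 0)"
    unfolding \<beta>_def \<rho>_def by (intro tendsto_intros) simp_all
  then have ev_\<beta>: "\<forall>\<^sub>F t in at 0. sqrt (\<Sum>k\<in>UNIV. (\<beta> t k)^2) < e"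
    by (rule order_tendstoD(2)) (simp add: \<beta>_def \<rho>_def \<open>e > 0\<close>)
  obtain t where inj_t: "injective_frame (\<lambda>k. F k + t *\<^sub>R D k)" and \<rho>_t: "\<rho> t < 1/2"
    and \<beta>_t: "sqrt (\<Sum>k\<in>UNIV. (\<beta> t k)^2) < e"
    using eventually_happens'[OF at_neq_bot eventually_conj[OF ev_inj eventually_conj[OF ev_\<rho> ev_\<beta>]]]
    by auto
  obtain G' where "parseval G'" "injective_frame G'" "\<And>k. norm (F k - G' k) \<le> \<beta> t k"
  proof (rule normalized_affine_frame_near[OF parseval_F, of t D])
    show "\<bar>t\<bar> * norm (frame_cross_op F D) + t^2 * norm (frame_op D) < 1/2"
      using \<rho>_t by (simp add: \<rho>_def)
  qed (use inj_t in \<open>auto intro!: that simp: \<beta>_def \<rho>_def\<close>)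
  moreover have "frame_dist F G' < e"
    using \<beta>_t frame_dist_le calculation(3) order_le_less_trans by blast
  ultimately show ?thesis by blast
qed

end

section \<open>The real case\<close>

interpretation R: conj_field "id :: real \<Rightarrow> real"
  by unfold_locales (simp_all add: power2_eq_square)

lemma real_hinner: "R.hinner x y = x \<bullet> y"
  by (simp add: R.hinner_def inner_vec_def inner_real_def)

lemma parseval_real_iff: "parseval_real F \<longleftrightarrow> R.parseval F"
  by (simp add: parseval_real_def R.parseval_def real_hinner)

lemma self_adjoint_real_iff: "self_adjoint_real T \<longleftrightarrow> R.self_adj T"
  unfolding self_adjoint_real_def R.self_adj_def linear_iff scalar_mult_eq_scaleR real_hinner
  by (metis (no_types))

lemma injective_real_iff: "injective_real F \<longleftrightarrow> R.injective_frame F"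
  by (simp add: injective_real_def R.injective_frame_def self_adjoint_real_iff real_hinner)

lemma sum_UNIV_pairs: "(\<Sum>p\<in>UNIV. f p) = (\<Sum>i\<in>UNIV. \<Sum>j\<in>UNIV. f (i, j))"
  by (simp add: sum.cartesian_product)

definition pair_matrix :: "'a^('n \<times> 'n) \<Rightarrow> 'a^'n^'n" where
  "pair_matrix z = (\<chi> i j. z $ (i, j))"

lemma pair_matrix_eq_0_iff: "pair_matrix z = 0 \<longleftrightarrow> z = 0"
  by (auto simp: pair_matrix_def vec_eq_iff)

lemma all_pair_matrix: "(\<forall>z. P (pair_matrix z)) \<longleftrightarrow> (\<forall>Y. P Y)"
proof -
  have "Y = pair_matrix (\<chi> p. Y $ fst p $ snd p)" for Y :: "'a^'n^'n"
    by (simp add: pair_matrix_def vec_eq_iff)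
  then show ?thesis by metis
qed

lemma inj_matrix_iff_kernel_pair_matrix:
  fixes L :: "'a::field^('n::finite \<times> 'n)^'b::finite"
  assumes "\<And>z. L *v z = 0 \<longleftrightarrow> Q (pair_matrix z)"
  shows "inj ((*v) L) \<longleftrightarrow> (\<forall>Y. Q Y \<longrightarrow> Y = 0)"
  using all_pair_matrix[of "\<lambda>Y. Q Y \<longrightarrow> Y = 0"] assms
  by (simp add: vec.linear_inj_iff_eq_0[OF matrix_vector_mul_linear_gen] pair_matrix_eq_0_iff)

text \<open>The rows \<open>Inl k\<close> compute the quadratic forms \<open>\<langle>Y G k, G k\<rangle>\<close> of \<open>Y = pair_matrix z\<close>, the
  rows \<open>Inr q\<close> vanish exactly when \<open>Y\<close> is symmetric.\<close>

definition real_inj_matrix :: "('m::finite \<Rightarrow> real^'n) \<Rightarrow> real^('n \<times> 'n)^('m + 'n \<times> 'n)" where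
  "real_inj_matrix G = (\<chi> b p. case b of Inl k \<Rightarrow> G k $ fst p * G k $ snd p
      | Inr q \<Rightarrow> (if p = q then 1 else 0) - (if p = (snd q, fst q) then 1 else 0))"

lemma real_inj_matrix_Inl:
  "(real_inj_matrix G *v z) $ Inl k = R.hinner (pair_matrix z *v G k) (G k)"
  by (simp add: real_inj_matrix_def pair_matrix_def R.hinner_def matrix_vector_mult_def
      sum_UNIV_pairs sum_distrib_left sum_distrib_right mult_ac)

lemma real_inj_matrix_Inr: "(real_inj_matrix G *v z) $ Inr q = z $ q - z $ (snd q, fst q)"
proof -
  have "(real_inj_matrix G *v z) $ Inr q
      = (\<Sum>p\<in>UNIV. (if p = q then z$p else 0) - (if p = (snd q, fst q) then z$p else 0))"
    by (auto simp: real_inj_matrix_def matrix_vector_mult_def intro!: sum.cong)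
  then show ?thesis by (simp add: sum_subtractf)
qed

lemma injective_frame_iff_real_inj_matrix:
  "R.injective_frame G \<longleftrightarrow> inj ((*v) (real_inj_matrix G))"
proof -
  have "real_inj_matrix G *v z = 0 \<longleftrightarrow>
      R.ctrans (pair_matrix z) = pair_matrix z \<and> (\<forall>k. R.hinner (pair_matrix z *v G k) (G k) = 0)"
    for z
    by (auto simp: vec_eq_iff split_sum_all real_inj_matrix_Inl real_inj_matrix_Inr R.ctrans_def
        pair_matrix_def)
  then show ?thesis
    unfolding R.injective_frame_iff_hermitian by (rule inj_matrix_iff_kernel_pair_matrix[symmetric])
qed

lemma real_poly_fun_real_inj_matrix:
  "R.real_poly_fun (\<lambda>t. real_inj_matrix (\<lambda>k. F k + t *\<^sub>R (H k - F k)) $ b $ a)"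
proof (cases b)
  case (Inl k)
  have "R.real_poly_fun (\<lambda>t. a + t *\<^sub>R b)" for a b :: real by (rule R.real_poly_fun_affine)
  then show ?thesis
    using Inl by (simp add: real_inj_matrix_def, intro R.real_poly_fun_mult) simp_all
qed (simp add: real_inj_matrix_def R.real_poly_fun_const)

lemma card_UNIV_pairs: "card (UNIV :: ('n::finite \<times> 'n) set) = CARD('n) * CARD('n)"
  by (simp add: UNIV_Times_UNIV[symmetric] card_cartesian_product del: UNIV_Times_UNIV)

text \<open>The \<open>n(n+1)/2\<close> vectors \<open>e\<^sub>i + e\<^sub>j\<close> with \<open>i \<le> j\<close> form an injective frame: for a
  symmetric \<open>T\<close> the vectors with \<open>i = j\<close> give \<open>T\<^sub>i\<^sub>i = 0\<close>, and then those with \<open>i < j\<close>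
  give \<open>T\<^sub>i\<^sub>j = 0\<close>.\<close>

lemma injective_real_frame_exists:
  assumes card: "CARD('n::finite) * (CARD('n) + 1) \<le> 2 * CARD('m::finite)"
  shows "\<exists>H :: 'm \<Rightarrow> real^'n. R.injective_frame H"
proof -
  define P where "P = {(i::'n, j::'n). to_nat i \<le> to_nat j}"
  define S where "S = {(i::'n, j::'n). to_nat j \<le> to_nat i}"
  have "P \<inter> S = (\<lambda>i. (i, i)) ` UNIV"
    by (auto simp: P_def S_def inj_eq[OF inj_to_nat])
  then have "card (P \<inter> S) = CARD('n)" by (simp add: card_image inj_on_def)
  moreover have "S = (\<lambda>(i, j). (j, i)) ` P" by (auto simp: P_def S_def image_iff)
  then have "card S = card P" by (simp add: card_image swap_inj_on)
  moreover have "P \<union> S = UNIV" by (auto simp: P_def S_def)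
  moreover have "card P + card S = card (P \<union> S) + card (P \<inter> S)"
    by (rule card_Un_Int) simp_all
  ultimately have "2 * card P = CARD('n) * CARD('n) + CARD('n)"
    by (simp add: card_UNIV_pairs)
  then have "card P \<le> card (UNIV :: 'm set)" using card by simp
  then obtain \<phi> :: "'n \<times> 'n \<Rightarrow> 'm" where \<phi>: "inj_on \<phi> P"
    using card_le_inj[of P "UNIV :: 'm set"] by auto
  define H where "H k = (if k \<in> \<phi> ` P
      then axis (fst (inv_into P \<phi> k)) 1 + axis (snd (inv_into P \<phi> k)) 1 else (0::real^'n))" for k
  have H_\<phi>: "H (\<phi> p) = axis (fst p) 1 + axis (snd p) 1" if "p \<in> P" for p
    using that by (simp add: H_def inv_into_f_f[OF \<phi>])
  show ?thesis
  proof (intro exI[of _ H], unfold R.injective_frame_def, intro allI impI, elim conjE)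
    fix T assume T: "R.self_adj T" and zero: "\<forall>k. R.hinner (T (H k)) (H k) = 0"
    define q where "q a b = R.hinner (T (axis a 1)) (axis b 1)" for a b
    have q_sym: "q b a = q a b" for a b using R.self_adj_hinner_swap[OF T] by (simp add: q_def)
    have q_P: "q i i + q i j + q j i + q j j = 0" if "(i, j) \<in> P" for i j
      using zero[rule_format, of "\<phi> (i, j)"] R.self_adj_quadratic_form_axis_pair[OF T, of i 1 j]
        H_\<phi>[OF that] by (simp add: q_def)
    have q_diag: "q i i = 0" for i using q_P[of i i] by (simp add: P_def)
    have "q a b = 0" for a b
    proof (cases "to_nat a \<le> to_nat b")
      case True then show ?thesis using q_P[of a b] q_diag q_sym[of a b] by (simp add: P_def)
    next
      case False then show ?thesis using q_P[of b a] q_diag q_sym[of a b] by (simp add: P_def)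
    qed
    then show "T = (\<lambda>_. 0)" using R.self_adj_eq_0_if_hinner_axis[OF T] q_def by simp
  qed
qed

lemma parseval_real_approx:
  fixes F :: "'m::finite \<Rightarrow> real^'n::finite"
  assumes "CARD('n) * (CARD('n) + 1) \<le> 2 * CARD('m)" and "parseval_real F" and "e > 0"
  shows "\<exists>G. parseval_real G \<and> injective_real G \<and> frame_dist F G < e"
proof -
  obtain H :: "'m \<Rightarrow> real^'n" where "R.injective_frame H"
    using injective_real_frame_exists[OF assms(1)] by blast
  then show ?thesis
    using R.parseval_injective_approx[OF injective_frame_iff_real_inj_matrix
        real_poly_fun_real_inj_matrix] assms
    by (simp add: parseval_real_iff injective_real_iff)
qed

section \<open>The complex case\<close>

interpretation C: conj_field cnj
  by unfold_locales (simp_all add: complex_norm_square[symmetric])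

lemma complex_hinner: "C.hinner = cinner"
  by (simp add: fun_eq_iff C.hinner_def cinner_def)

lemma parseval_complex_iff: "parseval_complex F \<longleftrightarrow> C.parseval F"
  by (simp add: parseval_complex_def C.parseval_def complex_hinner)

lemma injective_complex_iff: "injective_complex F \<longleftrightarrow> C.injective_frame F"
  by (simp add: injective_complex_def C.injective_frame_def self_adjoint_complex_def
      C.self_adj_def complex_hinner)

text \<open>Over \<open>\<complex>\<close> the Hermitian matrices \<open>Y + Y*\<close> and \<open>\<i> (Y - Y*)\<close> determine \<open>Y\<close>, and both
  inherit vanishing quadratic forms from \<open>Y\<close>.\<close>

lemma complex_injective_frame_iff:
  "C.injective_frame G \<longleftrightarrow> (\<forall>Y. (\<forall>k. C.hinner (Y *v G k) (G k) = 0) \<longrightarrow> Y = 0)"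
proof
  assume "C.injective_frame G"
  then have herm_0: "M = 0" if "C.ctrans M = M" and "\<And>k. C.hinner (M *v G k) (G k) = 0" for M
    using that by (simp add: C.injective_frame_iff_hermitian)
  show "\<forall>Y. (\<forall>k. C.hinner (Y *v G k) (G k) = 0) \<longrightarrow> Y = 0"
  proof (intro allI impI)
    fix Y assume zero: "\<forall>k. C.hinner (Y *v G k) (G k) = 0"
    have zero_adj: "C.hinner (C.ctrans Y *v G k) (G k) = 0" for k
      using zero C.cj_hinner[of "G k" "Y *v G k"] by (simp add: C.hinner_matrix_left)
    have re_0: "Y + C.ctrans Y = 0"
      using zero zero_adj by (intro herm_0) (simp_all add: C.ctrans_add add.commute
          matrix_vector_mult_add_rdistrib C.hinner_add_left)
    define M where "M = (\<chi> i j. \<i> * (Y $ i $ j - cnj (Y $ j $ i)))"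
    have M_mult: "M *v x = \<i> *s (Y *v x - C.ctrans Y *v x)" for x
      by (simp add: M_def C.ctrans_def matrix_vector_mult_def vec_eq_iff sum_distrib_left
          algebra_simps sum_subtractf)
    have "C.ctrans M = M" by (simp add: M_def C.ctrans_def vec_eq_iff algebra_simps)
    moreover have "C.hinner (M *v G k) (G k) = 0" for k
      using zero zero_adj by (simp add: M_mult C.hinner_scale_left C.hinner_diff_left)
    ultimately have im_0: "M = 0" by (rule herm_0)
    have "Y $ i $ j = 0" for i j
    proof -
      have "Y $ i $ j + cnj (Y $ j $ i) = 0"
        using arg_cong[OF re_0, of "\<lambda>M. M $ i $ j"] by (simp add: C.ctrans_def)
      moreover have "Y $ i $ j - cnj (Y $ j $ i) = 0"
        using arg_cong[OF im_0, of "\<lambda>M. M $ i $ j"] by (simp add: M_def)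
      moreover have "2 * Y $ i $ j = (Y $ i $ j + cnj (Y $ j $ i)) + (Y $ i $ j - cnj (Y $ j $ i))"
        by simp
      ultimately show ?thesis by simp
    qed
    then show "Y = 0" by (simp add: vec_eq_iff)
  qed
qed (auto simp: C.injective_frame_iff_hermitian)

definition complex_inj_matrix :: "('m::finite \<Rightarrow> complex^'n) \<Rightarrow> complex^('n \<times> 'n)^'m" where
  "complex_inj_matrix G = (\<chi> k p. cnj (G k $ fst p) * G k $ snd p)"

lemma complex_inj_matrix_mult:
  "(complex_inj_matrix G *v z) $ k = C.hinner (pair_matrix z *v G k) (G k)"
  by (simp add: complex_inj_matrix_def pair_matrix_def C.hinner_def matrix_vector_mult_def
      sum_UNIV_pairs sum_distrib_left sum_distrib_right mult_ac)

lemma injective_frame_iff_complex_inj_matrix: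
  "C.injective_frame G \<longleftrightarrow> inj ((*v) (complex_inj_matrix G))"
proof -
  have "complex_inj_matrix G *v z = 0 \<longleftrightarrow> (\<forall>k. C.hinner (pair_matrix z *v G k) (G k) = 0)" for z
    by (simp add: vec_eq_iff complex_inj_matrix_mult)
  then show ?thesis
    unfolding complex_injective_frame_iff by (rule inj_matrix_iff_kernel_pair_matrix[symmetric])
qed

lemma real_poly_fun_complex_inj_matrix:
  "C.real_poly_fun (\<lambda>t. complex_inj_matrix (\<lambda>k. F k + t *\<^sub>R (H k - F k)) $ b $ a)"
  unfolding complex_inj_matrix_def vec_lambda_beta vector_add_component vector_scaleR_component
  by (intro C.real_poly_fun_mult C.real_poly_fun_cj C.real_poly_fun_affine)

text \<open>The \<open>n\<^sup>2\<close> vectors \<open>e\<^sub>i + e\<^sub>j\<close> (\<open>i < j\<close>) and \<open>e\<^sub>i + \<i> e\<^sub>j\<close> (\<open>i \<ge> j\<close>) form an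
  injective frame: the diagonal ones give \<open>T\<^sub>i\<^sub>i = 0\<close>, the others the real and imaginary parts
  of \<open>T\<^sub>i\<^sub>j\<close>.\<close>

lemma injective_complex_frame_exists:
  assumes card: "CARD('n::finite)^2 \<le> CARD('m::finite)"
  shows "\<exists>H :: 'm \<Rightarrow> complex^'n. C.injective_frame H"
proof -
  obtain \<phi> :: "'n \<times> 'n \<Rightarrow> 'm" where \<phi>: "inj \<phi>"
    using card card_UNIV_pairs card_le_inj[of "UNIV :: ('n \<times> 'n) set" "UNIV :: 'm set"]
    by (auto simp: power2_eq_square)
  define c where "c i j = (if to_nat i < to_nat j then 1 else \<i>)" for i j :: 'n
  define H where "H k = (if k \<in> range \<phi>
      then axis (fst (inv \<phi> k)) 1 + c (fst (inv \<phi> k)) (snd (inv \<phi> k)) *s axis (snd (inv \<phi> k)) 1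
      else (0::complex^'n))" for k
  have H_\<phi>: "H (\<phi> (i, j)) = axis i 1 + c i j *s axis j 1" for i j
    by (simp add: H_def inv_f_f[OF \<phi>])
  show ?thesis
  proof (intro exI[of _ H], unfold C.injective_frame_def, intro allI impI, elim conjE)
    fix T assume T: "C.self_adj T" and zero: "\<forall>k. C.hinner (T (H k)) (H k) = 0"
    define q where "q a b = C.hinner (T (axis a 1)) (axis b 1)" for a b
    have q_swap: "q b a = cnj (q a b)" for a b
      unfolding q_def by (rule C.self_adj_hinner_swap[OF T])
    have q_pair: "q i i + cnj (c i j) * q i j + c i j * q j i + c i j * cnj (c i j) * q j j = 0" for i j
      using zero[rule_format, of "\<phi> (i, j)"] C.self_adj_quadratic_form_axis_pair[OF T, of i "c i j" j]
      by (simp add: q_def H_\<phi>)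
    have q_diag: "q i i = 0" for i
      using q_pair[of i i] by (simp add: c_def algebra_simps)
    have q_lt: "q a b = 0" if "to_nat a < to_nat b" for a b
    proof -
      have "q a b + cnj (q a b) = 0"
        using q_pair[of a b] that q_diag q_swap[of a b] by (simp add: c_def)
      moreover have "\<i> * (q a b - cnj (q a b)) = 0"
        using q_pair[of b a] that q_diag q_swap[of a b] by (simp add: c_def algebra_simps)
      ultimately show ?thesis by (simp add: complex_eq_iff)
    qed
    have "q a b = 0" for a b
      using q_lt[of a b] q_lt[of b a] q_swap[of b a] q_diag[of a] inj_eq[OF inj_to_nat, of a b]
      by (cases "to_nat a" "to_nat b" rule: linorder_cases) auto
    then show "T = (\<lambda>_. 0)" using C.self_adj_eq_0_if_hinner_axis[OF T] q_def by simp
  qed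
qed

lemma parseval_complex_approx:
  fixes F :: "'m::finite \<Rightarrow> complex^'n::finite"
  assumes "CARD('n)^2 \<le> CARD('m)" and "parseval_complex F" and "e > 0"
  shows "\<exists>G. parseval_complex G \<and> injective_complex G \<and> frame_dist F G < e"
proof -
  obtain H :: "'m \<Rightarrow> complex^'n" where "C.injective_frame H"
    using injective_complex_frame_exists[OF assms(1)] by blast
  then show ?thesis
    using C.parseval_injective_approx[OF injective_frame_iff_complex_inj_matrix
        real_poly_fun_complex_inj_matrix] assms
    by (simp add: parseval_complex_iff injective_complex_iff)
qed

theorem mainTheorem7:
  shows "(2 * CARD('m::finite) \<ge> CARD('n::finite) * (CARD('n) + 1) \<longrightarrow>
          (\<forall>F :: 'm \<Rightarrow> real^'n. parseval_real F \<longrightarrow>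
            (\<forall>e>0. \<exists>G. parseval_real G \<and> injective_real G \<and> frame_dist F G < e)))
       \<and> (CARD('m) \<ge> CARD('n)^2 \<longrightarrow>
          (\<forall>F :: 'm \<Rightarrow> complex^'n. parseval_complex F \<longrightarrow>
            (\<forall>e>0. \<exists>G. parseval_complex G \<and> injective_complex G \<and> frame_dist F G < e)))"
  using parseval_real_approx parseval_complex_approx by blast

end
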